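(* Let $A$ be a commutative ring, $B=A[z_1,\ldots,z_n]$, and $a_1,\ldots,a_n\in A$ a regular sequence in $A$. Let $\mathcal D:B^n\to B$ be the $A$-linear map $\mathcal D(h_1,\ldots,h_n)=\sum_{i=1}^n(\partial_{z_i}h_i-a_ih_i)$, and let $\mathfrak a=Aa_1+\cdots+Aa_n$. Let $g\in B$ have total degree $d$ and let $g_d$ be its homogeneous component of degree $d$. If $g\in\mathrm{Im}\,\mathcal D$, then every coefficient of $g_d$ lies in $\mathfrak a$.
   Context: $\partial_{z_i}$ denotes the formal partial derivative with respect to $z_i$ on $B$. *)

theory Defs
  imports Main
begin

text \<open>Polynomials in B = A[z_0,...,z_{n-1}] are represented by their coefficient
  functions: a map from exponent vectors (nat \<Rightarrow> nat) to coefficients in A,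
  with finite support, and supported on exponent vectors involving only the
  variables z_0, ..., z_{n-1}.\<close>

definition is_poly :: "nat \<Rightarrow> ((nat \<Rightarrow> nat) \<Rightarrow> 'a::comm_ring_1) \<Rightarrow> bool" where
  "is_poly n h \<longleftrightarrow> finite {\<alpha>. h \<alpha> \<noteq> 0} \<and> (\<forall>\<alpha>. h \<alpha> \<noteq> 0 \<longrightarrow> (\<forall>i\<ge>n. \<alpha> i = 0))"

definition mdeg :: "nat \<Rightarrow> (nat \<Rightarrow> nat) \<Rightarrow> nat" where
  "mdeg n \<alpha> = (\<Sum>i<n. \<alpha> i)"

definition pdz :: "nat \<Rightarrow> ((nat \<Rightarrow> nat) \<Rightarrow> 'a::comm_ring_1) \<Rightarrow> ((nat \<Rightarrow> nat) \<Rightarrow> 'a)" where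
  "pdz i h = (\<lambda>\<alpha>. of_nat (\<alpha> i + 1) * h (\<alpha>(i := \<alpha> i + 1)))"

definition in_ideal_gen :: "(nat \<Rightarrow> 'a::comm_ring_1) \<Rightarrow> nat \<Rightarrow> 'a \<Rightarrow> bool" where
  "in_ideal_gen a k x \<longleftrightarrow> (\<exists>c. x = (\<Sum>j<k. c j * a j))"

definition regular_seq :: "(nat \<Rightarrow> 'a::comm_ring_1) \<Rightarrow> nat \<Rightarrow> bool" where
  "regular_seq a n \<longleftrightarrow>
     (\<forall>i<n. \<forall>x. in_ideal_gen a i (x * a i) \<longrightarrow> in_ideal_gen a i x) \<and> \<not> in_ideal_gen a n 1"

definition Dmap :: "nat \<Rightarrow> (nat \<Rightarrow> 'a::comm_ring_1) \<Rightarrow> (nat \<Rightarrow> (nat \<Rightarrow> nat) \<Rightarrow> 'a) \<Rightarrow> ((nat \<Rightarrow> nat) \<Rightarrow> 'a)" where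
  "Dmap n a h = (\<lambda>\<alpha>. \<Sum>i<n. pdz i (h i) \<alpha> - a i * h i \<alpha>)"

end

theory Submission
  imports Defs
begin

(* Write D = \<Sum>_i \<nabla>_i with \<nabla>_j f = \<partial>_{z_j} f - a_j f; the operators \<nabla>_j
   commute.  Suppose g = D h with every h_i of total degree \<le> m.
   - If m \<le> d, then in degree d the derivative terms of D h come from degree d+1 > m,
     so g_\<alpha> = -\<Sum>_i a_i h_i(\<alpha>) lies in the ideal (a_1,...,a_n) for |\<alpha>| = d.
   - If m > d, the degree-m part of g vanishes, so for |\<beta>| = m the coefficients
     (h_i(\<beta>))_i form a syzygy of a_1,...,a_n.  Since the sequence is (weakly) regular,
     every syzygy is Koszul: h_i(\<beta>) = \<Sum>_j c_ij(\<beta>) a_j with c skew-symmetric.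
     Putting C_ij = the degree-m polynomial with coefficients c_ij and
     h'_i = h_i + \<Sum>_j \<nabla>_j C_ij, skew-symmetry and commutativity of the \<nabla>'s give
     D h' = D h, while the degree-m parts cancel, so every h'_i has degree \<le> m - 1.
   Induction on m (the descent) proves the theorem. *)

definition deg_bound :: "nat \<Rightarrow> nat \<Rightarrow> ((nat \<Rightarrow> nat) \<Rightarrow> 'a::zero) \<Rightarrow> bool" where
  "deg_bound n m f \<longleftrightarrow> (\<forall>\<alpha>. f \<alpha> \<noteq> 0 \<longrightarrow> mdeg n \<alpha> \<le> m)"

lemma mdeg_raise: "i < n \<Longrightarrow> mdeg n (\<alpha>(i := \<alpha> i + 1)) = mdeg n \<alpha> + 1"
proof -
  assume i: "i < n"
  have "(\<Sum>j<n. (\<alpha>(i := \<alpha> i + 1)) j) = (\<Sum>j<n. \<alpha> j + (if j = i then 1 else 0))"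
    by (rule sum.cong) auto
  also have "\<dots> = (\<Sum>j<n. \<alpha> j) + 1" using i by (simp add: sum.distrib)
  finally show ?thesis by (simp add: mdeg_def)
qed

definition nab :: "nat \<Rightarrow> (nat \<Rightarrow> 'a::comm_ring_1) \<Rightarrow> ((nat \<Rightarrow> nat) \<Rightarrow> 'a) \<Rightarrow> ((nat \<Rightarrow> nat) \<Rightarrow> 'a)"
  where "nab j a f = (\<lambda>\<alpha>. pdz j f \<alpha> - a j * f \<alpha>)"

lemma Dmap_nab: "Dmap n a h = (\<lambda>\<alpha>. \<Sum>i<n. nab i a (h i) \<alpha>)"
  by (simp add: Dmap_def nab_def)

lemma nab_commute: "i \<noteq> j \<Longrightarrow> nab i a (nab j a f) = nab j a (nab i a f)"
proof (rule ext)
  fix \<alpha> :: "nat \<Rightarrow> nat" assume ij: "i \<noteq> j"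
  have "\<alpha>(i := \<alpha> i + 1, j := \<alpha> j + 1) = \<alpha>(j := \<alpha> j + 1, i := \<alpha> i + 1)"
    using ij by (simp add: fun_upd_twist)
  then show "nab i a (nab j a f) \<alpha> = nab j a (nab i a f) \<alpha>"
    unfolding nab_def pdz_def using ij by (simp add: algebra_simps)
qed

lemma nab_add: "nab i a (\<lambda>\<alpha>. f \<alpha> + g \<alpha>) = (\<lambda>\<alpha>. nab i a f \<alpha> + nab i a g \<alpha>)"
  by (rule ext) (simp add: nab_def pdz_def algebra_simps)

lemma nab_neg: "nab i a (\<lambda>\<alpha>. - f \<alpha>) = (\<lambda>\<alpha>. - nab i a f \<alpha>)"
  by (rule ext) (simp add: nab_def pdz_def algebra_simps)

lemma nab_zero: "nab i a (\<lambda>\<alpha>. 0) = (\<lambda>\<alpha>. 0)"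
  by (rule ext) (simp add: nab_def pdz_def)

lemma nab_sum: "nab i a (\<lambda>\<alpha>. \<Sum>k\<in>K. F k \<alpha>) = (\<lambda>\<alpha>. \<Sum>k\<in>K. nab i a (F k) \<alpha>)"
  by (rule ext) (simp add: nab_def pdz_def sum_distrib_left sum_subtractf)

lemma Dmap_add: "Dmap n a (\<lambda>i \<alpha>. h i \<alpha> + k i \<alpha>) = (\<lambda>\<alpha>. Dmap n a h \<alpha> + Dmap n a k \<alpha>)"
  by (simp add: Dmap_nab nab_add sum.distrib)

text \<open>In degrees \<ge> m the derivative part of \<nabla>_j kills a polynomial of degree \<le> m:
  only the multiplication by -a_j survives.\<close>
lemma nab_top:
  assumes "deg_bound n m f" "j < n" "m \<le> mdeg n \<beta>"
  shows "nab j a f \<beta> = - (f \<beta> * a j)"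
proof -
  have "mdeg n (\<beta>(j := \<beta> j + 1)) > m" using mdeg_raise[OF assms(2)] assms(3) by simp
  then have "f (\<beta>(j := \<beta> j + 1)) = 0" using assms(1) by (force simp: deg_bound_def)
  then show ?thesis by (simp add: nab_def pdz_def mult.commute)
qed

lemma Dmap_top:
  assumes "\<forall>i<n. deg_bound n m (h i)" "m \<le> mdeg n \<beta>"
  shows "Dmap n a h \<beta> = - (\<Sum>i<n. h i \<beta> * a i)"
  unfolding Dmap_nab sum_negf[symmetric] using assms by (intro sum.cong) (auto intro: nab_top)

lemma skew_sum_zero:
  fixes Y :: "nat \<Rightarrow> nat \<Rightarrow> 'a::ab_group_add"
  assumes "\<forall>i<n. \<forall>j<n. i \<noteq> j \<longrightarrow> Y i j = - Y j i" "\<forall>i<n. Y i i = 0"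
  shows "(\<Sum>i<n. \<Sum>j<n. Y i j) = 0"
  using assms
proof (induction n)
  case 0
  then show ?case by simp
next
  case (Suc n)
  have "(\<Sum>i<Suc n. \<Sum>j<Suc n. Y i j) = (\<Sum>i<n. (\<Sum>j<n. Y i j) + Y i n) + ((\<Sum>j<n. Y n j) + Y n n)"
    by (simp only: sum.lessThan_Suc)
  also have "\<dots> = (\<Sum>i<n. \<Sum>j<n. Y i j) + ((\<Sum>i<n. Y i n + Y n i) + Y n n)"
    by (simp only: sum.distrib add.assoc)
  also have "(\<Sum>i<n. Y i n + Y n i) = 0"
    using Suc.prems(1) by (intro sum.neutral ballI) (simp add: eq_neg_iff_add_eq_0)
  also have "(\<Sum>i<n. \<Sum>j<n. Y i j) = 0"
    using Suc.prems less_SucI by (intro Suc.IH) blast+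
  finally show ?case using Suc.prems(2) by simp
qed

text \<open>Consequently D annihilates every tuple (\<Sum>_j \<nabla>_j C_ij)_i built from a
  skew-symmetric matrix C of polynomials, because the \<nabla>'s commute.\<close>
lemma Dmap_skew_zero:
  assumes skew: "\<And>i j. i < n \<Longrightarrow> j < n \<Longrightarrow> C j i = (\<lambda>\<beta>. - C i j \<beta>)"
    and diag: "\<And>i. i < n \<Longrightarrow> C i i = (\<lambda>\<beta>. 0)"
  shows "Dmap n a (\<lambda>i \<beta>. \<Sum>j<n. nab j a (C i j) \<beta>) \<beta> = 0"
proof -
  have "Dmap n a (\<lambda>i \<beta>. \<Sum>j<n. nab j a (C i j) \<beta>) \<beta>
      = (\<Sum>i<n. \<Sum>j<n. nab i a (nab j a (C i j)) \<beta>)"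
    by (simp add: Dmap_nab nab_sum)
  also have "\<dots> = 0"
  proof (rule skew_sum_zero; intro allI impI)
    fix i j assume ij: "i < n" "j < n" "i \<noteq> j"
    have "nab j a (nab i a (C j i)) = (\<lambda>\<beta>. - nab j a (nab i a (C i j)) \<beta>)"
      unfolding skew[OF ij(1,2)] nab_neg ..
    also have "\<dots> = (\<lambda>\<beta>. - nab i a (nab j a (C i j)) \<beta>)"
      using nab_commute[OF ij(3)] by metis
    finally show "nab i a (nab j a (C i j)) \<beta> = - nab j a (nab i a (C j i)) \<beta>" by simp
  next
    fix i assume "i < n"
    then show "nab i a (nab i a (C i i)) \<beta> = 0" by (simp add: diag nab_zero)
  qed
  finally show ?thesis .
qed

definition weak_regular_seq :: "(nat \<Rightarrow> 'a::comm_ring_1) \<Rightarrow> nat \<Rightarrow> bool" where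
  "weak_regular_seq a n \<longleftrightarrow> (\<forall>i<n. \<forall>x. in_ideal_gen a i (x * a i) \<longrightarrow> in_ideal_gen a i x)"

lemma regular_seq_weak: "regular_seq a n \<Longrightarrow> weak_regular_seq a n"
  by (simp add: regular_seq_def weak_regular_seq_def)

lemma in_ideal_gen_lincomb: "in_ideal_gen a n (\<Sum>i<n. x i * a i)"
  unfolding in_ideal_gen_def by (rule exI[of _ x]) (rule refl)

lemma koszul_syzygy:
  fixes a :: "nat \<Rightarrow> 'a::comm_ring_1"
  assumes "weak_regular_seq a n" "(\<Sum>i<n. x i * a i) = 0"
  shows "\<exists>c. (\<forall>i<n. \<forall>j<n. c j i = - c i j) \<and> (\<forall>i<n. c i i = 0)
           \<and> (\<forall>i<n. x i = (\<Sum>j<n. c i j * a j))"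
  using assms
proof (induction n arbitrary: x)
  case 0
  then show ?case by simp
next
  case (Suc n)
  have regp: "weak_regular_seq a n"
    using Suc.prems(1) less_SucI unfolding weak_regular_seq_def by blast
  have s: "(\<Sum>i<n. x i * a i) + x n * a n = 0" using Suc.prems(2) by simp
  \<comment> \<open>the last coefficient lies in (a_0,...,a_{n-1}) by regularity of a_n\<close>
  have "in_ideal_gen a n (x n * a n)"
    unfolding in_ideal_gen_def
    by (rule exI[of _ "\<lambda>i. - x i"]) (use s in \<open>simp add: sum_negf eq_neg_iff_add_eq_0 add.commute\<close>)
  then have "in_ideal_gen a n (x n)"
    using Suc.prems(1) lessI unfolding weak_regular_seq_def by blast
  then obtain y where y: "x n = (\<Sum>j<n. y j * a j)" unfolding in_ideal_gen_def by blast
  \<comment> \<open>subtracting the Koszul relations y_j (a_n e_j - a_j e_n) leaves a syzygy of length n\<close>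
  define x' where "x' = (\<lambda>i. x i + y i * a n)"
  have "(\<Sum>i<n. x' i * a i) = (\<Sum>i<n. x i * a i) + a n * (\<Sum>i<n. y i * a i)"
    by (simp add: x'_def sum.distrib sum_distrib_left algebra_simps)
  also have "\<dots> = 0" using s y by (simp add: mult.commute)
  finally obtain c' where c': "\<forall>i<n. \<forall>j<n. c' j i = - c' i j" "\<forall>i<n. c' i i = 0"
      "\<forall>i<n. x' i = (\<Sum>j<n. c' i j * a j)"
    using Suc.IH[OF regp, of x'] by blast
  define c where "c = (\<lambda>i j. if i < n \<and> j < n then c' i j else if i = n \<and> j < n then y j
      else if j = n \<and> i < n then - y i else 0)"
  have "\<forall>i<Suc n. \<forall>j<Suc n. c j i = - c i j"
  proof (intro allI impI)
    fix i j assume "i < Suc n" "j < Suc n"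
    then consider "i < n" "j < n" | "i = n" "j < n" | "i < n" "j = n" | "i = n" "j = n"
      by (metis less_SucE)
    then show "c j i = - c i j"
    proof cases
      case 1
      then have "c' j i = - c' i j" using c'(1) by blast
      with 1 show ?thesis by (simp add: c_def)
    qed (simp_all add: c_def)
  qed
  moreover have "\<forall>i<Suc n. c i i = 0" using c'(2) by (simp add: c_def)
  moreover have "x i = (\<Sum>j<Suc n. c i j * a j)" if "i < Suc n" for i
  proof (cases "i < n")
    case True
    have "(\<Sum>j<Suc n. c i j * a j) = (\<Sum>j<n. c' i j * a j) - y i * a n"
      using True by (simp add: c_def)
    also have "\<dots> = x i" using c'(3) True by (simp add: x'_def algebra_simps)
    finally show ?thesis by simp
  next
    case False
    then have "i = n" using that by simp
    then have "(\<Sum>j<Suc n. c i j * a j) = (\<Sum>j<n. y j * a j)" by (simp add: c_def)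
    then show ?thesis using y \<open>i = n\<close> by simp
  qed
  ultimately show ?case by blast
qed

lemma top_part_koszul:
  assumes regp: "weak_regular_seq a n"
    and bound: "\<forall>i<n. deg_bound n (Suc m) (h i)"
    and top: "\<forall>\<beta>. mdeg n \<beta> = Suc m \<longrightarrow> Dmap n a h \<beta> = 0"
  obtains C where "\<And>i j \<beta>. C i j \<beta> \<noteq> 0 \<Longrightarrow> mdeg n \<beta> = Suc m"
    and "\<And>i j. i < n \<Longrightarrow> j < n \<Longrightarrow> C j i = (\<lambda>\<beta>. - C i j \<beta>)"
    and "\<And>i. i < n \<Longrightarrow> C i i = (\<lambda>\<beta>. 0)"
    and "\<And>i \<beta>. i < n \<Longrightarrow> mdeg n \<beta> = Suc m \<Longrightarrow> h i \<beta> = (\<Sum>j<n. C i j \<beta> * a j)"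
proof -
  have "\<forall>\<beta>. \<exists>c. mdeg n \<beta> = Suc m \<longrightarrow> (\<forall>i<n. \<forall>j<n. c j i = - c i j) \<and> (\<forall>i<n. c i i = 0)
          \<and> (\<forall>i<n. h i \<beta> = (\<Sum>j<n. c i j * a j))"
  proof
    fix \<beta>
    show "\<exists>c. mdeg n \<beta> = Suc m \<longrightarrow> (\<forall>i<n. \<forall>j<n. c j i = - c i j) \<and> (\<forall>i<n. c i i = 0)
          \<and> (\<forall>i<n. h i \<beta> = (\<Sum>j<n. c i j * a j))"
    proof (cases "mdeg n \<beta> = Suc m")
      case True
      then have "(\<Sum>i<n. h i \<beta> * a i) = 0"
        using Dmap_top[OF bound, of \<beta> a] top by simp
      then show ?thesis using koszul_syzygy[OF regp, of "\<lambda>i. h i \<beta>"] by blast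
    qed simp
  qed
  then obtain c where c: "\<And>\<beta>. mdeg n \<beta> = Suc m \<Longrightarrow> (\<forall>i<n. \<forall>j<n. c \<beta> j i = - c \<beta> i j)
      \<and> (\<forall>i<n. c \<beta> i i = 0) \<and> (\<forall>i<n. h i \<beta> = (\<Sum>j<n. c \<beta> i j * a j))"
    by metis
  define C where "C = (\<lambda>i j \<beta>. if mdeg n \<beta> = Suc m then c \<beta> i j else 0)"
  show thesis
  proof (rule that[of C])
    fix i j \<beta> assume "C i j \<beta> \<noteq> 0"
    then show "mdeg n \<beta> = Suc m" by (simp add: C_def split: if_splits)
  next
    fix i j assume "i < n" "j < n"
    then have "c \<beta> j i = - c \<beta> i j" if "mdeg n \<beta> = Suc m" for \<beta>
      using c[OF that] by blast
    then show "C j i = (\<lambda>\<beta>. - C i j \<beta>)" by (simp add: C_def fun_eq_iff)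
  next
    fix i assume "i < n"
    then have "c \<beta> i i = 0" if "mdeg n \<beta> = Suc m" for \<beta>
      using c[OF that] by blast
    then show "C i i = (\<lambda>\<beta>. 0)" by (simp add: C_def fun_eq_iff)
  next
    fix i \<beta> assume i: "i < n" and deg: "mdeg n \<beta> = Suc m"
    then have "h i \<beta> = (\<Sum>j<n. c \<beta> i j * a j)" using c[OF deg] by blast
    then show "h i \<beta> = (\<Sum>j<n. C i j \<beta> * a j)" using deg by (simp add: C_def)
  qed
qed

text \<open>The degree-reduction step: under the same hypotheses there is h' of degree
  \<le> m with D h' = D h, namely h'_i = h_i + \<Sum>_j \<nabla>_j C_ij.\<close>
lemma degree_reduction:
  assumes regp: "weak_regular_seq a n"
    and bound: "\<forall>i<n. deg_bound n (Suc m) (h i)"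
    and top: "\<forall>\<beta>. mdeg n \<beta> = Suc m \<longrightarrow> Dmap n a h \<beta> = 0"
  shows "\<exists>h'. (\<forall>i<n. deg_bound n m (h' i)) \<and> Dmap n a h' = Dmap n a h"
proof -
  obtain C where hom: "\<And>i j \<beta>. C i j \<beta> \<noteq> 0 \<Longrightarrow> mdeg n \<beta> = Suc m"
    and skew: "\<And>i j. i < n \<Longrightarrow> j < n \<Longrightarrow> C j i = (\<lambda>\<beta>. - C i j \<beta>)"
    and diag: "\<And>i. i < n \<Longrightarrow> C i i = (\<lambda>\<beta>. 0)"
    and koszul: "\<And>i \<beta>. i < n \<Longrightarrow> mdeg n \<beta> = Suc m \<Longrightarrow> h i \<beta> = (\<Sum>j<n. C i j \<beta> * a j)"
    using top_part_koszul[OF assms] by blast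
  define k where "k = (\<lambda>i \<beta>. \<Sum>j<n. nab j a (C i j) \<beta>)"
  define h' where "h' = (\<lambda>i \<beta>. h i \<beta> + k i \<beta>)"
  have "Dmap n a h' = Dmap n a h"
    using Dmap_skew_zero[of n C a, OF skew diag] by (simp add: h'_def k_def Dmap_add)
  moreover have "deg_bound n m (h' i)" if i: "i < n" for i
    unfolding deg_bound_def
  proof (intro allI impI; rule ccontr)
    fix \<beta> assume nz: "h' i \<beta> \<noteq> 0" and "\<not> mdeg n \<beta> \<le> m"
    then have ge: "Suc m \<le> mdeg n \<beta>" by simp
    \<comment> \<open>in degrees \<ge> m+1 the correction k_i equals -\<Sum>_j C_ij a_j, cancelling h_i\<close>
    have CB: "deg_bound n (Suc m) (C i j)" for j using hom by (force simp: deg_bound_def)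
    have k_top: "k i \<beta> = - (\<Sum>j<n. C i j \<beta> * a j)"
      unfolding k_def sum_negf[symmetric] by (intro sum.cong) (auto intro: nab_top[OF CB _ ge])
    have "h' i \<beta> = 0"
    proof (cases "mdeg n \<beta> = Suc m")
      case True
      then show ?thesis by (simp add: h'_def k_top koszul[OF i])
    next
      case False
      then have "h i \<beta> = 0" using bound i ge by (force simp: deg_bound_def)
      moreover have "C i j \<beta> = 0" for j using hom False by blast
      ultimately show ?thesis by (simp add: h'_def k_top)
    qed
    with nz show False by simp
  qed
  ultimately show ?thesis by blast
qed

lemma descent:
  assumes regp: "weak_regular_seq a n"
    and g_bound: "deg_bound n d g"
  shows "\<forall>i<n. deg_bound n m (h i) \<Longrightarrow> g = Dmap n a h \<Longrightarrow> mdeg n \<alpha> = d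
     \<Longrightarrow> in_ideal_gen a n (g \<alpha>)"
proof (induction m arbitrary: h)
  case 0
  then have "g \<alpha> = (\<Sum>i<n. (- h i \<alpha>) * a i)" using Dmap_top[of n 0 h \<alpha> a] by (simp add: sum_negf)
  then show ?case using in_ideal_gen_lincomb by metis
next
  case (Suc m)
  show ?case
  proof (cases "Suc m \<le> d")
    case True
    then have "g \<alpha> = (\<Sum>i<n. (- h i \<alpha>) * a i)"
      using Suc.prems Dmap_top[of n "Suc m" h \<alpha> a] by (simp add: sum_negf)
    then show ?thesis using in_ideal_gen_lincomb by metis
  next
    case False
    then have "\<forall>\<beta>. mdeg n \<beta> = Suc m \<longrightarrow> Dmap n a h \<beta> = 0"
      using g_bound Suc.prems(2) by (force simp: deg_bound_def)
    then obtain h' where h': "\<forall>i<n. deg_bound n m (h' i)" "Dmap n a h' = Dmap n a h"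
      using degree_reduction[OF regp] Suc.prems(1) by blast
    have "g = Dmap n a h'" using h'(2) Suc.prems(2) by simp
    then show ?thesis using Suc.IH[OF h'(1)] Suc.prems(3) by blast
  qed
qed

lemma common_deg_bound:
  assumes "\<forall>i<n. is_poly n (h i)"
  shows "\<exists>m. \<forall>i<n. deg_bound n m (h i)"
proof -
  define S where "S = (\<Union>i<n. {\<beta>. h i \<beta> \<noteq> 0})"
  have "finite S" unfolding S_def using assms by (auto simp: is_poly_def)
  then have "\<forall>i<n. deg_bound n (Max (mdeg n ` S)) (h i)"
    by (auto simp: deg_bound_def S_def intro: Max_ge)
  then show ?thesis by blast
qed

theorem lemma2p5:
  fixes a :: "nat \<Rightarrow> 'a::comm_ring_1" and n d :: nat
    and g :: "(nat \<Rightarrow> nat) \<Rightarrow> 'a"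
  assumes reg: "regular_seq a n"
    and gpoly: "is_poly n g"
    and deg_le: "\<forall>\<alpha>. g \<alpha> \<noteq> 0 \<longrightarrow> mdeg n \<alpha> \<le> d"
    and deg_eq: "\<exists>\<alpha>. g \<alpha> \<noteq> 0 \<and> mdeg n \<alpha> = d"
    and img: "\<exists>h. (\<forall>i<n. is_poly n (h i)) \<and> g = Dmap n a h"
  shows "\<forall>\<alpha>. mdeg n \<alpha> = d \<longrightarrow> in_ideal_gen a n (g \<alpha>)"
proof -
  obtain h where hp: "\<forall>i<n. is_poly n (h i)" and gh: "g = Dmap n a h" using img by blast
  obtain m where "\<forall>i<n. deg_bound n m (h i)" using common_deg_bound[OF hp] by blast
  moreover have "deg_bound n d g" using deg_le by (simp add: deg_bound_def)
  ultimately show ?thesis using descent[OF regular_seq_weak[OF reg]] gh by blast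
qed

end
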